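(* With the notation of the context, the infimum $\beta^*=\inf_{x\in\Delta}F(x)$ is attained at exactly one point of $\Delta$; that is, the optimal point of $\inf_{x\in\Delta}F(x)$ is unique.
   Context: Fix an integer $n\ge2$ and free generators $\xi_1,\dots,\xi_n$ of a free group; throughout $i,j,k\in\{1,\dots,n\}$ and $t,s,p\in\{-1,+1\}$. Let $\Psi$ be the set of reduced words $\xi_i^{2t}$; $\xi_i^t\xi_j^{2s}$ ($i\ne j$); $\xi_i^t\xi_j^s\xi_k^p$ ($i\ne j$, $j\ne k$). For a letter $\xi_a^x$ let $S(\xi_a^x)\subset\Psi$ be the set of words in $\Psi$ beginning with $\xi_a^x$, namely $\{\xi_a^{2x}\}\cup\{\xi_a^x\xi_j^{2s}\}\cup\{\xi_a^x\xi_j^s\xi_k^p\}$; for $a\ne b$ let $S(\xi_a^x\xi_b^y)=\{\xi_a^x\xi_b^{2y}\}\cup\{\xi_a^x\xi_b^y\xi_k^p: k\ne b\}$. A relation $r$ is a pair $(\psi_r,\Psi_r)$ with $\psi_r\in\Psi$, $\Psi_r\subseteq\Psi$. Let $\mathcal{F}$ be the collection of the following relations (indices $i_0\ne j_0$, in type 5a $i_0,j_0,k_0$ pairwise distinct, all signs arbitrary): 1a: $\psi_r=\xi_{i_0}^{2t_0}$, $\Psi_r=\Psi\setminus S(\xi_{i_0}^{t_0})$; 2b: $\psi_r=\xi_{i_0}^{t_0}\xi_{j_0}^{2s_0}$, $\Psi_r=\Psi\setminus S(\xi_{i_0}^{t_0}\xi_{j_0}^{s_0})$; 3a: $\psi_r=\xi_{i_0}^{t_0}\xi_{j_0}^{s_0}\xi_{i_0}^{t_0}$,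 $\Psi_r=\Psi\setminus S(\xi_{j_0}^{s_0}\xi_{i_0}^{t_0})$; 4b: $\psi_r=\xi_{i_0}^{t_0}\xi_{j_0}^{s_0}\xi_{i_0}^{-t_0}$, $\Psi_r=S(\xi_{i_0}^{t_0})$; 5a: $\psi_r=\xi_{i_0}^{t_0}\xi_{j_0}^{s_0}\xi_{k_0}^{p_0}$, $\Psi_r=\Psi\setminus S(\xi_{j_0}^{s_0}\xi_{k_0}^{p_0})$. Let $\Delta=\{x\in\mathbb{R}^\Psi: x(\psi)>0\ \forall\psi,\ \sum_{\psi}x(\psi)=1\}$. For a relation $r$ and $x\in\Delta$ put $x_r=x(\psi_r)$, $X_r=\sum_{\psi\in\Psi_r}x(\psi)$, $f_r(x)=\frac{1-x_r}{x_r}\cdot\frac{1-X_r}{X_r}$, and $F(x)=\max_{r\in\mathcal{F}}f_r(x)$. *)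

theory Defs
  imports Complex_Main
begin

text \<open>A letter \<open>\<xi>_i^t\<close> is the pair \<open>(i, t)\<close> with \<open>i \<in> {1..n}\<close>, \<open>t \<in> {-1,1}\<close>;
  a (reduced) word is the list of its letters, e.g. \<open>\<xi>_i^{2t}\<close> is \<open>[(i,t),(i,t)]\<close>.\<close>

type_synonym letter = "nat \<times> int"
type_synonym word = "letter list"

definition signs :: "int set" where
  "signs = {-1, 1}"

definition Psi :: "nat \<Rightarrow> word set" where
  "Psi n =
     {[(i,t),(i,t)] | i t. i \<in> {1..n} \<and> t \<in> signs}
   \<union> {[(i,t),(j,s),(j,s)] | i t j s. i \<in> {1..n} \<and> j \<in> {1..n} \<and> t \<in> signs \<and> s \<in> signs \<and> i \<noteq> j}
   \<union> {[(i,t),(j,s),(k,p)] | i t j s k p. i \<in> {1..n} \<and> j \<in> {1..n} \<and> k \<in> {1..n}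
        \<and> t \<in> signs \<and> s \<in> signs \<and> p \<in> signs \<and> i \<noteq> j \<and> j \<noteq> k}"

definition S1 :: "nat \<Rightarrow> letter \<Rightarrow> word set" where
  "S1 n l =
     {[l, l]}
   \<union> {[l,(j,s),(j,s)] | j s. j \<in> {1..n} \<and> s \<in> signs \<and> j \<noteq> fst l}
   \<union> {[l,(j,s),(k,p)] | j s k p. j \<in> {1..n} \<and> k \<in> {1..n} \<and> s \<in> signs \<and> p \<in> signs
        \<and> j \<noteq> fst l \<and> j \<noteq> k}"

definition S2 :: "nat \<Rightarrow> letter \<Rightarrow> letter \<Rightarrow> word set" where
  "S2 n l m =
     {[l, m, m]}
   \<union> {[l, m, (k,p)] | k p. k \<in> {1..n} \<and> p \<in> signs \<and> k \<noteq> fst m}"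

text \<open>A relation is a pair \<open>(\<psi>_r, \<Psi>_r)\<close>; \<open>Fam n\<close> is the collection \<open>\<F>\<close>.\<close>
definition Fam :: "nat \<Rightarrow> (word \<times> word set) set" where
  "Fam n =
     {([(i,t),(i,t)], Psi n - S1 n (i,t)) | i t. i \<in> {1..n} \<and> t \<in> signs}
   \<union> {([(i,t),(j,s),(j,s)], Psi n - S2 n (i,t) (j,s)) | i t j s.
        i \<in> {1..n} \<and> j \<in> {1..n} \<and> t \<in> signs \<and> s \<in> signs \<and> i \<noteq> j}
   \<union> {([(i,t),(j,s),(i,t)], Psi n - S2 n (j,s) (i,t)) | i t j s.
        i \<in> {1..n} \<and> j \<in> {1..n} \<and> t \<in> signs \<and> s \<in> signs \<and> i \<noteq> j}
   \<union> {([(i,t),(j,s),(i,-t)], S1 n (i,t)) | i t j s.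
        i \<in> {1..n} \<and> j \<in> {1..n} \<and> t \<in> signs \<and> s \<in> signs \<and> i \<noteq> j}
   \<union> {([(i,t),(j,s),(k,p)], Psi n - S2 n (j,s) (k,p)) | i t j s k p.
        i \<in> {1..n} \<and> j \<in> {1..n} \<and> k \<in> {1..n} \<and> t \<in> signs \<and> s \<in> signs \<and> p \<in> signs
        \<and> i \<noteq> j \<and> j \<noteq> k \<and> i \<noteq> k}"

text \<open>The open simplex \<open>\<Delta>\<close> in \<open>\<real>^\<Psi>\<close>; points are functions vanishing off \<open>\<Psi>\<close>.\<close>
definition Delta :: "nat \<Rightarrow> (word \<Rightarrow> real) set" where
  "Delta n = {x. (\<forall>\<psi>\<in>Psi n. x \<psi> > 0) \<and> (\<forall>\<psi>. \<psi> \<notin> Psi n \<longrightarrow> x \<psi> = 0)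
                 \<and> (\<Sum>\<psi>\<in>Psi n. x \<psi>) = 1}"

definition frel :: "word \<times> word set \<Rightarrow> (word \<Rightarrow> real) \<Rightarrow> real" where
  "frel r x = (let xr = x (fst r); Xr = (\<Sum>\<psi>\<in>snd r. x \<psi>)
               in ((1 - xr) / xr) * ((1 - Xr) / Xr))"

definition FF :: "nat \<Rightarrow> (word \<Rightarrow> real) \<Rightarrow> real" where
  "FF n x = Max ((\<lambda>r. frel r x) ` Fam n)"

end

theory Submission
  imports Defs
begin

text \<open>Every word w of \<open>\<Psi>\<close> is the head \<open>\<psi>_r\<close> of exactly one relation r. The minimiser
  x* is found explicitly: it takes the value a on the squares, d on the words
  \<open>\<xi>_i^t \<xi>_j^s \<xi>_i^{-t}\<close> and b on all other words of length three, where a, b, d and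
  c > 1 are chosen (by the intermediate value theorem) so that \<open>f_r = c\<close> there for every r.
  If \<open>F(x) \<le> c\<close>, then \<open>f_r(x) \<le> c = f_r(x*)\<close> for every r; since the sublevel sets of
  \<open>(u, v) \<mapsto> (1-u)/u \<cdot> (1-v)/v\<close> are convex, this yields one tangent inequality
  \<open>L_w(x - x*) \<ge> 0\<close> per word, with equality only if \<open>x(w) = x*(w)\<close>. On the hyperplane
  \<open>\<Sum> h = 0\<close> a count of words shows that the sum of all \<open>L_w(h)\<close> is \<open>\<kappa> < 1\<close> times their
  sum over the squares, so all \<open>L_w(x - x*)\<close> vanish and x = x*.\<close>

lemma unique_argmin_INF:
  fixes f :: "'a \<Rightarrow> 'b::conditionally_complete_linorder"
  assumes "p \<in> A" and "\<And>x. x \<in> A \<Longrightarrow> f x \<le> f p \<Longrightarrow> x = p"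
  shows "\<exists>!x. x \<in> A \<and> f x = (INF y\<in>A. f y)"
proof -
  have "f p \<le> f y" if "y \<in> A" for y
    using assms(2)[OF that] by (metis linorder_le_cases)
  then have "(INF y\<in>A. f y) = f p" using assms(1) by (intro cInf_eq_minimum) auto
  then show ?thesis using assms by (intro ex1I[of _ p]) auto
qed

section \<open>Letters and the words of \<open>\<Psi>\<close>\<close>

definition letters :: "nat \<Rightarrow> letter set" where
  "letters n = {1..n} \<times> signs"

definition other_letters :: "nat \<Rightarrow> letter \<Rightarrow> letter set" where
  "other_letters n l = {m \<in> letters n. fst m \<noteq> fst l}"

definition inv_letter :: "letter \<Rightarrow> letter" where
  "inv_letter l = (fst l, - snd l)"

lemma finite_letters [simp]: "finite (letters n)"
  by (simp add: letters_def signs_def)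

lemma finite_other_letters [simp]: "finite (other_letters n l)"
  by (simp add: other_letters_def)

lemma card_letters: "card (letters n) = 2 * n"
  by (simp add: letters_def card_cartesian_product signs_def)

lemma other_letters_eq: "other_letters n l = ({1..n} - {fst l}) \<times> signs"
  by (auto simp: other_letters_def letters_def)

lemma card_other_letters: "l \<in> letters n \<Longrightarrow> card (other_letters n l) = 2 * n - 2"
  by (auto simp: other_letters_eq letters_def card_cartesian_product signs_def)

lemma other_letters_subset: "other_letters n l \<subseteq> letters n"
  by (simp add: other_letters_def)

lemma other_letters_irrefl [simp]: "l \<notin> other_letters n l"
  by (simp add: other_letters_def)

lemma inv_letter_notin_other_letters [simp]: "inv_letter l \<notin> other_letters n l"
  by (simp add: other_letters_def inv_letter_def)

lemma inv_letter_in_letters [simp]: "inv_letter l \<in> letters n \<longleftrightarrow> l \<in> letters n"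
  by (cases l) (auto simp: inv_letter_def letters_def signs_def)

lemma other_letters_inv_letter [simp]: "other_letters n (inv_letter l) = other_letters n l"
  by (simp add: other_letters_def inv_letter_def)

lemma inv_letter_inv_letter [simp]: "inv_letter (inv_letter l) = l"
  by (simp add: inv_letter_def)

lemma inv_letter_neq: "l \<in> letters n \<Longrightarrow> inv_letter l \<noteq> l"
  by (auto simp: inv_letter_def letters_def signs_def prod_eq_iff)

lemma inv_letter_other_letters: "l \<in> letters n \<Longrightarrow> m \<in> other_letters n l \<Longrightarrow> inv_letter l \<in> other_letters n m"
  using inv_letter_in_letters[of l n] by (auto simp: other_letters_def inv_letter_def)

lemma S2_eq: "S2 n l m = insert [l,m,m] ((\<lambda>q. [l,m,q]) ` other_letters n m)"
  by (auto simp: S2_def other_letters_def letters_def)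

lemma S1_eq: "S1 n l = insert [l,l] (\<Union>m\<in>other_letters n l. S2 n l m)"
  by (auto simp: S1_def S2_def other_letters_def letters_def)

lemma Psi_eq: "Psi n = (\<Union>l\<in>letters n. S1 n l)"
  by (auto simp: Psi_def S1_def letters_def)

lemma finite_S2 [simp]: "finite (S2 n l m)" by (simp add: S2_eq)
lemma finite_S1 [simp]: "finite (S1 n l)" by (simp add: S1_eq)
lemma finite_Psi [simp]: "finite (Psi n)" by (simp add: Psi_eq)

lemma S1_subset_Psi: "l \<in> letters n \<Longrightarrow> S1 n l \<subseteq> Psi n"
  by (auto simp: Psi_eq)

lemma S2_subset_S1: "m \<in> other_letters n l \<Longrightarrow> S2 n l m \<subseteq> S1 n l"
  by (auto simp: S1_eq)

lemma S2_subset_Psi: "l \<in> letters n \<Longrightarrow> m \<in> other_letters n l \<Longrightarrow> S2 n l m \<subseteq> Psi n"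
  using S1_subset_Psi S2_subset_S1 by blast

lemma sum_S2: "sum g (S2 n l m) = g [l,m,m] + (\<Sum>q\<in>other_letters n m. g [l,m,q])"
proof -
  have "[l,m,m] \<notin> (\<lambda>q. [l,m,q]) ` other_letters n m" by (auto simp: other_letters_def)
  moreover have "inj_on (\<lambda>q. [l,m,q]) (other_letters n m)" by (auto simp: inj_on_def)
  ultimately show ?thesis by (simp add: S2_eq sum.reindex)
qed

lemma sum_S1: "sum g (S1 n l) = g [l,l] + (\<Sum>m\<in>other_letters n l. sum g (S2 n l m))"
proof -
  have "[l,l] \<notin> (\<Union>m\<in>other_letters n l. S2 n l m)" by (auto simp: S2_eq)
  moreover have "sum g (\<Union>m\<in>other_letters n l. S2 n l m) = (\<Sum>m\<in>other_letters n l. sum g (S2 n l m))"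
    by (rule sum.UNION_disjoint) (auto simp: S2_eq)
  ultimately show ?thesis by (simp add: S1_eq)
qed

lemma sum_Psi: "sum g (Psi n) = (\<Sum>l\<in>letters n. sum g (S1 n l))"
  unfolding Psi_eq by (rule sum.UNION_disjoint) (auto simp: S1_eq S2_eq)

lemma Psi_cases:
  assumes "w \<in> Psi n"
  obtains (square) l where "l \<in> letters n" "w = [l,l]"
  | (repeat) l m where "l \<in> letters n" "m \<in> other_letters n l" "w = [l,m,m]"
  | (triple) l m q where "l \<in> letters n" "m \<in> other_letters n l" "q \<in> other_letters n m" "w = [l,m,q]"
  using assms by (auto simp: Psi_eq S1_eq S2_eq)

section \<open>Relations indexed by their head words\<close>

text \<open>\<open>companions n w\<close> is the set \<open>\<Psi>_r\<close> of the relation r with \<open>\<psi>_r = w\<close>; its last branch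
  covers both type 3a (q = l) and type 5a.\<close>

fun companions :: "nat \<Rightarrow> word \<Rightarrow> word set" where
  "companions n [l, _] = Psi n - S1 n l"
| "companions n [l, m, q] =
     (if q = m then Psi n - S2 n l m else if q = inv_letter l then S1 n l else Psi n - S2 n m q)"
| "companions n _ = {}"

lemma square_in_Psi: "l \<in> letters n \<Longrightarrow> [l,l] \<in> Psi n"
  using S1_subset_Psi by (fastforce simp: S1_eq)

lemma repeat_in_Psi: "l \<in> letters n \<Longrightarrow> m \<in> other_letters n l \<Longrightarrow> [l,m,m] \<in> Psi n"
  using S2_subset_Psi by (fastforce simp: S2_eq)

lemma triple_in_Psi:
  "l \<in> letters n \<Longrightarrow> m \<in> other_letters n l \<Longrightarrow> q \<in> other_letters n m \<Longrightarrow> [l,m,q] \<in> Psi n"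
  using S2_subset_Psi by (fastforce simp: S2_eq)

lemma same_generator_letter:
  assumes "l \<in> letters n" "q \<in> letters n" "fst q = fst l"
  shows "q = l \<or> q = inv_letter l"
  using assms by (cases l, cases q) (auto simp: letters_def inv_letter_def signs_def)

lemma Fam_subset: "Fam n \<subseteq> (\<lambda>w. (w, companions n w)) ` Psi n"
proof -
  have signs: "t \<in> signs \<Longrightarrow> t \<noteq> 0" "t \<in> signs \<Longrightarrow> -t \<in> signs" for t :: int
    by (auto simp: signs_def)
  show ?thesis
    unfolding Fam_def
    by (intro Un_least; clarify)
      (auto intro!: image_eqI square_in_Psi repeat_in_Psi triple_in_Psi
        simp: letters_def other_letters_def inv_letter_def signs)
qed

lemma Fam_supset: "(\<lambda>w. (w, companions n w)) ` Psi n \<subseteq> Fam n"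
proof clarify
  fix w assume "w \<in> Psi n"
  then show "(w, companions n w) \<in> Fam n"
  proof (cases rule: Psi_cases)
    case (square l)
    then show ?thesis by (cases l) (auto simp: Fam_def letters_def)
  next
    case (repeat l m)
    then show ?thesis by (cases l, cases m) (auto simp: Fam_def letters_def other_letters_def)
  next
    case (triple l m q)
    have "q \<noteq> m" using triple(3) by auto
    obtain i t j s k p where ltrs: "l = (i,t)" "m = (j,s)" "q = (k,p)" by (cases l, cases m, cases q)
    have "q = inv_letter l \<or> q = l \<or> fst q \<noteq> fst l"
      using same_generator_letter[of l n q] triple other_letters_subset by blast
    then show ?thesis
      using triple \<open>q \<noteq> m\<close> inv_letter_neq[of l n] unfolding ltrs
      by (auto simp: Fam_def letters_def other_letters_def inv_letter_def)
  qed
qed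

lemma Fam_eq: "Fam n = (\<lambda>w. (w, companions n w)) ` Psi n"
  using Fam_subset Fam_supset by (rule subset_antisym)

lemma hd_S1: "w \<in> S1 n l \<Longrightarrow> hd w = l"
  by (auto simp: S1_eq S2_eq)

lemma length_S2: "w \<in> S2 n l m \<Longrightarrow> length w = 3"
  by (auto simp: S2_eq)

lemma companions_triple:
  "q \<in> other_letters n m \<Longrightarrow>
    companions n [l,m,q] = (if q = inv_letter l then S1 n l else Psi n - S2 n m q)"
  by (auto simp: other_letters_def)

lemma companions_subset_Psi:
  assumes "w \<in> Psi n"
  shows "companions n w \<subseteq> Psi n"
  using assms by (cases rule: Psi_cases) (auto simp: companions_triple dest: S1_subset_Psi)

lemma companions_nonempty:
  assumes "w \<in> Psi n"
  shows "companions n w \<noteq> {}"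
  using assms
proof (cases rule: Psi_cases)
  case (square l)
  have "[inv_letter l, inv_letter l] \<in> companions n w"
    using square square_in_Psi[of "inv_letter l" n] hd_S1[of "[inv_letter l, inv_letter l]" n l] inv_letter_neq[of l n] by auto
  then show ?thesis by blast
next
  case (repeat l m)
  have "[l,l] \<in> companions n w"
    using repeat square_in_Psi[of l n] length_S2[of "[l,l]" n l m] by auto
  then show ?thesis by blast
next
  case (triple l m q)
  show ?thesis
  proof (cases "q = inv_letter l")
    case True
    then have "[l,l] \<in> companions n w"
      unfolding triple(4) companions_triple[OF triple(3)] by (simp add: S1_eq)
    then show ?thesis by blast
  next
    case False
    have "m \<in> letters n" using triple(2) other_letters_subset by blast
    then have "[m,m] \<in> companions n w"
      unfolding triple(4) companions_triple[OF triple(3)]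
      using False square_in_Psi[of m n] length_S2[of "[m,m]" n m q] by auto
    then show ?thesis by blast
  qed
qed

section \<open>Sums of tangent forms\<close>

lemma sum_other_letters_swap:
  "(\<Sum>l\<in>letters n. \<Sum>m\<in>other_letters n l. g l m) = (\<Sum>l\<in>letters n. \<Sum>m\<in>other_letters n l. g m l)"
proof -
  have "(\<Sum>l\<in>letters n. \<Sum>m\<in>other_letters n l. g l m)
      = (\<Sum>m\<in>letters n. \<Sum>l\<in>{l. l \<in> letters n \<and> fst m \<noteq> fst l}. g l m)"
    unfolding other_letters_def by (rule sum.swap_restrict) auto
  also have "\<dots> = (\<Sum>m\<in>letters n. \<Sum>l\<in>other_letters n m. g l m)"
    by (intro sum.cong) (auto simp: other_letters_def)
  finally show ?thesis .
qed

lemma sum_other_letters_const: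
  fixes g :: "letter \<Rightarrow> real"
  shows "(\<Sum>l\<in>letters n. \<Sum>m\<in>other_letters n l. g l) = (2 * real n - 2) * (\<Sum>l\<in>letters n. g l)"
proof -
  have "(\<Sum>l\<in>letters n. \<Sum>m\<in>other_letters n l. g l) = (\<Sum>l\<in>letters n. (2 * real n - 2) * g l)"
    by (intro sum.cong) (auto simp: card_other_letters letters_def of_nat_diff)
  then show ?thesis by (simp add: sum_distrib_left)
qed

lemma sum_other_letters_inv_letter:
  "(\<Sum>l\<in>letters n. \<Sum>m\<in>other_letters n l. g m (inv_letter l))
    = (\<Sum>l\<in>letters n. \<Sum>m\<in>other_letters n l. g m l)"
proof -
  have "bij_betw inv_letter (letters n) (letters n)"
    by (rule bij_betw_byWitness[where f' = inv_letter]) auto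
  then show ?thesis
    by (subst sum.reindex_bij_betw[symmetric, where h = inv_letter]) simp_all
qed

definition shape_value :: "'a \<Rightarrow> 'a \<Rightarrow> 'a \<Rightarrow> word \<Rightarrow> 'a" where
  "shape_value a b d w = (if length w = 2 then a else if w ! 2 = inv_letter (w ! 0) then d else b)"

lemma shape_value_simps [simp]:
  "shape_value a b d [l, l'] = a"
  "shape_value a b d [l, m, q] = (if q = inv_letter l then d else b)"
  by (simp_all add: shape_value_def)

lemma shape_value_comp: "f (shape_value a b d w) = shape_value (f a) (f b) (f d) w"
  by (simp add: shape_value_def)

lemma sum_sum_S2:
  fixes h :: "word \<Rightarrow> real"
  shows "(\<Sum>l\<in>letters n. \<Sum>m\<in>other_letters n l. sum h (S2 n l m))
    = sum h (Psi n) - (\<Sum>l\<in>letters n. h [l,l])"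
  by (simp add: sum_Psi sum_S1 sum.distrib)

lemma sum_S2_companion_terms:
  fixes h :: "word \<Rightarrow> real"
  assumes h: "sum h (Psi n) = 0" and l: "l \<in> letters n" and m: "m \<in> other_letters n l"
  shows "(\<Sum>w\<in>S2 n l m. shape_value gA gB gD w * sum h (companions n w))
    = - gB * sum h (S2 n l m) + gD * sum h (S1 n l) + - gB * (sum h (S1 n m) - h [m,m])
      + gB * sum h (S2 n m (inv_letter l))"
proof -
  define G where "G w = shape_value gA gB gD w * sum h (companions n w)" for w
  have m': "m \<in> letters n" using m other_letters_subset by blast
  have il: "inv_letter l \<in> other_letters n m" by (rule inv_letter_other_letters[OF l m])
  have compl: "sum h (Psi n - S) = - sum h S" if "S \<subseteq> Psi n" for S
    using h sum_diff[OF finite_Psi that, of h] by simp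
  have repeat: "G [l,m,m] = - gB * sum h (S2 n l m)"
    using m compl[OF S2_subset_Psi[OF l m]] by (auto simp: G_def)
  have "G [l,m,q] = (if q = inv_letter l then gD * sum h (S1 n l) else - gB * sum h (S2 n m q))"
    if "q \<in> other_letters n m" for q
    using compl[OF S2_subset_Psi[OF m' that]] unfolding G_def companions_triple[OF that] by simp
  then have triples: "(\<Sum>q\<in>other_letters n m. G [l,m,q])
      = gD * sum h (S1 n l)
        + - gB * ((\<Sum>q\<in>other_letters n m. sum h (S2 n m q)) - sum h (S2 n m (inv_letter l)))"
    using il by (simp add: sum.remove sum_distrib_left)
  have block: "(\<Sum>q\<in>other_letters n m. sum h (S2 n m q)) = sum h (S1 n m) - h [m,m]"
    by (simp add: sum_S1)
  show ?thesis
    unfolding G_def[symmetric] sum_S2[of G] repeat triples block by (simp add: algebra_simps)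
qed

lemma sum_companion_terms:
  fixes h :: "word \<Rightarrow> real"
  assumes h: "sum h (Psi n) = 0"
  shows "(\<Sum>w\<in>Psi n. shape_value gA gB gD w * sum h (companions n w))
    = (2 * real n - 2) * gB * (\<Sum>l\<in>letters n. h [l,l])"
proof -
  define s1 where "s1 l = sum h (S1 n l)" for l
  define s2 where "s2 l m = sum h (S2 n l m)" for l m
  define T where "T = (\<Sum>l\<in>letters n. h [l,l])"
  have s1_total: "(\<Sum>l\<in>letters n. s1 l) = 0" using h by (simp add: s1_def sum_Psi)
  have s2_total: "(\<Sum>l\<in>letters n. \<Sum>m\<in>other_letters n l. s2 l m) = - T"
    using h by (simp add: s2_def T_def sum_sum_S2)
  have swap_s1: "(\<Sum>l\<in>letters n. \<Sum>m\<in>other_letters n l. s1 m - h [m,m])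
      = (\<Sum>l\<in>letters n. \<Sum>m\<in>other_letters n l. s1 l - h [l,l])"
    by (rule sum_other_letters_swap)
  have swap_s2: "(\<Sum>l\<in>letters n. \<Sum>m\<in>other_letters n l. s2 m (inv_letter l))
      = (\<Sum>l\<in>letters n. \<Sum>m\<in>other_letters n l. s2 l m)"
    unfolding sum_other_letters_inv_letter by (rule sum_other_letters_swap)
  have square: "shape_value gA gB gD [l,l] * sum h (companions n [l,l]) = - gA * s1 l"
    if "l \<in> letters n" for l
    using h sum_diff[OF finite_Psi S1_subset_Psi[OF that], of h] by (simp add: s1_def)
  have "(\<Sum>w\<in>Psi n. shape_value gA gB gD w * sum h (companions n w))
      = (\<Sum>l\<in>letters n. - gA * s1 l + (\<Sum>m\<in>other_letters n l.
          - gB * s2 l m + gD * s1 l + - gB * (s1 m - h [m,m]) + gB * s2 m (inv_letter l)))"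
    unfolding sum_Psi sum_S1
  proof (intro sum.cong refl)
    fix l assume l: "l \<in> letters n"
    show "shape_value gA gB gD [l,l] * sum h (companions n [l,l])
        + (\<Sum>m\<in>other_letters n l. \<Sum>w\<in>S2 n l m. shape_value gA gB gD w * sum h (companions n w))
      = - gA * s1 l + (\<Sum>m\<in>other_letters n l.
          - gB * s2 l m + gD * s1 l + - gB * (s1 m - h [m,m]) + gB * s2 m (inv_letter l))"
      unfolding square[OF l] s1_def s2_def using sum_S2_companion_terms[OF h l] by simp
  qed
  also have "\<dots> = - gA * (\<Sum>l\<in>letters n. s1 l)
      + (- gB * (\<Sum>l\<in>letters n. \<Sum>m\<in>other_letters n l. s2 l m)
      + gD * (\<Sum>l\<in>letters n. \<Sum>m\<in>other_letters n l. s1 l)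
      + - gB * (\<Sum>l\<in>letters n. \<Sum>m\<in>other_letters n l. s1 m - h [m,m])
      + gB * (\<Sum>l\<in>letters n. \<Sum>m\<in>other_letters n l. s2 m (inv_letter l)))"
    by (simp only: sum.distrib sum_distrib_left)
  also have "\<dots> = (2 * real n - 2) * gB * T"
    unfolding swap_s1 swap_s2 sum_other_letters_const s2_total
    by (simp add: sum_subtractf s1_total T_def algebra_simps)
  finally show ?thesis by (simp add: T_def)
qed

lemma sum_companion_forms:
  fixes h :: "word \<Rightarrow> real" and gA gB gD :: real
  assumes h: "sum h (Psi n) = 0"
  defines "F \<equiv> \<lambda>w. shape_value gA gB gD w * sum h (companions n w) + h w"
  shows "(\<Sum>w\<in>Psi n. F w) = (2 * real n - 2) * gB * (\<Sum>l\<in>letters n. F [l,l])"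
proof -
  have "F [l,l] = - gA * sum h (S1 n l) + h [l,l]" if "l \<in> letters n" for l
    using h sum_diff[OF finite_Psi S1_subset_Psi[OF that], of h] by (simp add: F_def)
  then have "(\<Sum>l\<in>letters n. F [l,l]) = - gA * (\<Sum>l\<in>letters n. sum h (S1 n l)) + (\<Sum>l\<in>letters n. h [l,l])"
    by (simp add: sum.distrib sum_distrib_left)
  then have "(\<Sum>l\<in>letters n. F [l,l]) = (\<Sum>l\<in>letters n. h [l,l])"
    using h by (simp add: sum_Psi)
  then show ?thesis
    using h sum_companion_terms[OF h] by (simp add: F_def sum.distrib)
qed

lemma sum_squares_le_sum_Psi:
  fixes F :: "word \<Rightarrow> real"
  assumes "\<And>w. w \<in> Psi n \<Longrightarrow> F w \<ge> 0"
  shows "(\<Sum>l\<in>letters n. F [l,l]) \<le> (\<Sum>w\<in>Psi n. F w)"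
  unfolding sum_Psi
proof (rule sum_mono)
  fix l assume l: "l \<in> letters n"
  have "sum F (S2 n l m) \<ge> 0" if "m \<in> other_letters n l" for m
    using assms S2_subset_Psi[OF l that] by (intro sum_nonneg) auto
  then show "F [l,l] \<le> sum F (S1 n l)" by (simp add: sum_S1 sum_nonneg)
qed

section \<open>The tangent inequality\<close>

definition odds :: "real \<Rightarrow> real" where
  "odds u = (1 - u) / u"

lemma frel_eq: "frel (w, V) x = odds (x w) * odds (sum x V)"
  by (simp add: frel_def odds_def Let_def)

lemma odds_product_tangent_gap:
  fixes c u v u0 v0 :: real
  assumes c: "c > 1" and u: "u > 0" and v: "v > 0" and u0: "u0 > 0" and v0: "v0 > 0"
    and le: "odds u * odds v \<le> c" and eq: "odds u0 * odds v0 = c"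
  shows "((1 + (c-1)*u0)^2 * (v - v0) + c * (u - u0)) * (1 + (c-1)*u) \<ge> c * (c-1) * (u - u0)^2"
proof -
  define k where "k = c - 1"
  have below: "1 - u \<le> v * (1 + k*u)"
    using le u v by (simp add: odds_def field_simps k_def algebra_simps)
  have on: "1 - u0 = v0 * (1 + k*u0)"
    using eq u0 v0 by (simp add: odds_def field_simps k_def algebra_simps)
  have prod: "(1 + k*v0) * (1 + k*u0) = c"
  proof -
    have "(1 + k*v0) * (1 + k*u0) = 1 + k*u0 + k*(v0*(1 + k*u0))" by (simp add: algebra_simps)
    also have "\<dots> = 1 + k" unfolding on[symmetric] by (simp add: algebra_simps)
    finally show ?thesis by (simp add: k_def)
  qed
  have "((1 + k*u0)^2 * (v - v0) + c * (u - u0)) * (1 + k*u)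
      = (v * (1 + k*u) - v0 * (1 + k*u)) * (1 + k*u0)^2 + c * (u - u0) * (1 + k*u)"
    by (simp add: algebra_simps)
  also have "\<dots> \<ge> ((1 - u) - v0 * (1 + k*u)) * (1 + k*u0)^2 + c * (u - u0) * (1 + k*u)"
    using below by (simp add: mult_right_mono)
  also have "(1 - u) - v0 * (1 + k*u) = - (u - u0) * (1 + k*v0)"
    using on by (simp add: algebra_simps)
  also have "- (u - u0) * (1 + k*v0) * (1 + k*u0)^2 + c * (u - u0) * (1 + k*u) = c * k * (u - u0)^2"
  proof -
    have "- (u - u0) * (1 + k*v0) * (1 + k*u0)^2 = - (u - u0) * ((1 + k*v0) * (1 + k*u0)) * (1 + k*u0)"
      by (simp add: power2_eq_square algebra_simps)
    also have "\<dots> = - (u - u0) * c * (1 + k*u0)" using prod by simp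
    finally show ?thesis by (simp add: power2_eq_square algebra_simps)
  qed
  finally show ?thesis by (simp add: k_def)
qed

lemma odds_product_tangent:
  fixes c u v u0 v0 :: real
  assumes "c > 1" "u > 0" "v > 0" "u0 > 0" "v0 > 0" "odds u * odds v \<le> c" "odds u0 * odds v0 = c"
  defines "\<gamma> \<equiv> (1 + (c-1)*u0)^2 / c"
  shows "0 \<le> \<gamma> * (v - v0) + (u - u0)"
    and "\<gamma> * (v - v0) + (u - u0) = 0 \<Longrightarrow> u = u0"
proof -
  note gap = odds_product_tangent_gap[OF assms(1-7)]
  have "1 + (c-1)*u > 0" using assms(1,2) by (simp add: add_pos_nonneg)
  moreover have "c * (c-1) * (u - u0)^2 \<ge> 0" using assms(1) by simp
  ultimately have nonneg: "(1 + (c-1)*u0)^2 * (v - v0) + c * (u - u0) \<ge> 0"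
    using gap by (meson order_trans zero_le_mult_iff not_le)
  have scaled: "\<gamma> * (v - v0) + (u - u0) = ((1 + (c-1)*u0)^2 * (v - v0) + c * (u - u0)) / c"
    using assms(1) by (simp add: \<gamma>_def field_simps)
  show "0 \<le> \<gamma> * (v - v0) + (u - u0)" unfolding scaled using nonneg assms(1) by simp
  assume "\<gamma> * (v - v0) + (u - u0) = 0"
  then have "c * (c-1) * (u - u0)^2 \<le> 0" using gap assms(1) unfolding scaled by simp
  then have "(u - u0)^2 \<le> 0" using assms(1) by (simp add: mult_le_0_iff)
  then show "u = u0" by simp
qed

lemma Delta_pos: "x \<in> Delta n \<Longrightarrow> w \<in> Psi n \<Longrightarrow> x w > 0"
  by (simp add: Delta_def)

lemma Delta_zero: "x \<in> Delta n \<Longrightarrow> w \<notin> Psi n \<Longrightarrow> x w = 0"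
  by (simp add: Delta_def)

lemma Delta_sum: "x \<in> Delta n \<Longrightarrow> sum x (Psi n) = 1"
  by (simp add: Delta_def)

lemma Delta_sum_pos: "x \<in> Delta n \<Longrightarrow> V \<subseteq> Psi n \<Longrightarrow> V \<noteq> {} \<Longrightarrow> sum x V > 0"
  by (intro sum_pos) (auto intro: finite_subset Delta_pos)

lemma frel_le_FF: "r \<in> Fam n \<Longrightarrow> frel r x \<le> FF n x"
  unfolding FF_def by (rule Max_ge) (simp_all add: Fam_eq)

lemma companion_tangent:
  assumes w: "w \<in> Psi n" and x: "x \<in> Delta n" and p: "p \<in> Delta n" and c: "c > 1"
    and "FF n x \<le> c" and "frel (w, companions n w) p = c"
  defines "L \<equiv> (1 + (c-1) * p w)^2 / c * (\<Sum>v\<in>companions n w. x v - p v) + (x w - p w)"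
  shows "0 \<le> L" and "L = 0 \<Longrightarrow> x w = p w"
proof -
  let ?V = "companions n w"
  have V: "?V \<subseteq> Psi n" "?V \<noteq> {}"
    using companions_subset_Psi[OF w] companions_nonempty[OF w] by auto
  have "odds (x w) * odds (sum x ?V) \<le> c"
    using frel_le_FF[of "(w, ?V)" n x] \<open>FF n x \<le> c\<close> w by (simp add: Fam_eq frel_eq)
  moreover have "odds (p w) * odds (sum p ?V) = c"
    using \<open>frel (w, ?V) p = c\<close> by (simp add: frel_eq)
  moreover have "L = (1 + (c-1) * p w)^2 / c * (sum x ?V - sum p ?V) + (x w - p w)"
    by (simp add: L_def sum_subtractf)
  ultimately show "0 \<le> L" and "L = 0 \<Longrightarrow> x w = p w"
    using odds_product_tangent[OF c Delta_pos[OF x w] Delta_sum_pos[OF x V] Delta_pos[OF p w]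
        Delta_sum_pos[OF p V]]
    by auto
qed

section \<open>The equalizing constants\<close>

text \<open>Solving \<open>f_r = c\<close> at the three-valued point for the relations of types 1a, 2b and 4b
  gives a, b and d in terms of c and of the mass s of a block \<open>S(\<xi>_i^t \<xi>_j^s)\<close>, here with
  N = n; a zero of \<open>block_defect N\<close> makes these consistent, s = (2N-2) b + d.\<close>

definition sq_mass :: "real \<Rightarrow> real \<Rightarrow> real" where
  "sq_mass N c = 1 / (1 + (2*N-1)*c)"

definition block_mass :: "real \<Rightarrow> real \<Rightarrow> real" where
  "block_mass N c = (2*N-1)*(c-1) / (1 + (2*N-1)*c) / (4*N*(N-1))"

definition generic_mass :: "real \<Rightarrow> real \<Rightarrow> real" where
  "generic_mass N c = block_mass N c / (block_mass N c + c * (1 - block_mass N c))"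

definition backtrack_mass :: "real \<Rightarrow> real \<Rightarrow> real" where
  "backtrack_mass N c = (2*N-1) / (2*N-1+c)"

definition block_defect :: "real \<Rightarrow> real \<Rightarrow> real" where
  "block_defect N c = (2*N-2) * generic_mass N c + backtrack_mass N c - block_mass N c"

lemma block_mass_bounds:
  assumes N: "N \<ge> 2" and c: "c \<ge> 1"
  shows "0 \<le> block_mass N c" "block_mass N c \<le> 1 / (4*N*(N-1))" "block_mass N c \<le> 1/8"
proof -
  have NN: "4*N*(N-1) \<ge> 8"
    using mult_mono[of 2 N 1 "N-1"] N by simp
  have den: "1 + (2*N-1)*c > 0" using N c by (simp add: add_pos_nonneg)
  have "(2*N-1)*(c-1) \<ge> 0" using N c by simp
  then show "0 \<le> block_mass N c" unfolding block_mass_def using NN den by simp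
  have "(2*N-1)*(c-1) \<le> 1 + (2*N-1)*c" using N by (simp add: algebra_simps)
  then have "(2*N-1)*(c-1) / (1 + (2*N-1)*c) \<le> 1" using den by simp
  then show le: "block_mass N c \<le> 1 / (4*N*(N-1))"
    unfolding block_mass_def by (rule divide_right_mono) (use NN in simp)
  have "1 / (4*N*(N-1)) \<le> 1/8" using NN by (simp add: frac_le)
  then show "block_mass N c \<le> 1/8" using le by linarith
qed

lemma block_mass_lower:
  assumes N: "N \<ge> 2" and c: "c \<ge> 3"
  shows "block_mass N c \<ge> 1 / (8*N*(N-1))"
proof -
  have NN: "4*N*(N-1) > 0" using N by simp
  have den: "1 + (2*N-1)*c > 0" using N c by (simp add: add_pos_nonneg)
  have "(2*N-1)*(c-2) \<ge> 3*1" using N c by (intro mult_mono) auto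
  then have "1/2 \<le> (2*N-1)*(c-1) / (1 + (2*N-1)*c)" using den by (simp add: field_simps)
  then have "1/2 / (4*N*(N-1)) \<le> (2*N-1)*(c-1) / (1 + (2*N-1)*c) / (4*N*(N-1))"
    by (rule divide_right_mono) (use NN in simp)
  then show ?thesis unfolding block_mass_def by simp
qed

lemma continuous_on_block_defect:
  assumes N: "N \<ge> 2"
  shows "continuous_on {1..C} (block_defect N)"
proof -
  have "1 + (2*N-1)*c \<noteq> 0" if "c \<in> {1..C}" for c
    using that N by (smt (verit) mult_nonneg_nonneg atLeastAtMost_iff)
  then have "continuous_on {1..C} (block_mass N)"
    unfolding block_mass_def using N by (intro continuous_intros) auto
  moreover have "block_mass N c + c * (1 - block_mass N c) \<noteq> 0" if "c \<in> {1..C}" for c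
  proof -
    have "0 \<le> block_mass N c" "block_mass N c \<le> 1/8" using block_mass_bounds[OF N] that by auto
    moreover have "c * (1 - block_mass N c) > 0" using that calculation by (intro mult_pos_pos) auto
    ultimately show ?thesis by linarith
  qed
  ultimately show ?thesis
    unfolding block_defect_def generic_mass_def backtrack_mass_def using N
    by (intro continuous_intros) auto
qed

lemma block_defect_at_1: "N \<ge> 2 \<Longrightarrow> block_defect N 1 > 0"
  by (simp add: block_defect_def generic_mass_def backtrack_mass_def block_mass_def)

lemma block_defect_large:
  assumes N: "N \<ge> 2"
  shows "block_defect N (64*N^3) \<le> 0"
proof -
  define C where "C = 64*N^3"
  define s where "s = block_mass N C"
  have C_eq: "C = 64*N*N*N" unfolding C_def by (simp add: power3_eq_cube)
  have C8: "C \<ge> 8*N"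
    using mult_mono[of 2 N 2 N] N unfolding C_eq by (simp add: mult.assoc mult_le_cancel_left)
  have C3: "C \<ge> 3" and Cpos: "C > 0" using N C8 by auto
  have s_low: "s \<ge> 1 / (8*N*(N-1))" unfolding s_def using block_mass_lower[OF N C3] .
  have s_up: "s \<le> 1/8" unfolding s_def using block_mass_bounds[OF N] C3 by simp
  have spos: "s > 0" using s_low N by (smt (verit) divide_pos_pos mult_pos_pos)
  have generic: "(2*N-2) * generic_mass N C \<le> s/2"
  proof -
    have "C * (1-s) > 0" using s_up Cpos by (intro mult_pos_pos) auto
    then have "generic_mass N C \<le> s / (C * (1-s))"
      unfolding generic_mass_def s_def[symmetric] using spos by (intro divide_left_mono) auto
    also have "\<dots> \<le> s / (C * (7/8))"
      using spos s_up Cpos by (intro divide_left_mono) (auto intro!: mult_pos_pos)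
    finally have "(2*N-2) * generic_mass N C \<le> (2*N-2) * (s / (C * (7/8)))"
      using N by (intro mult_left_mono) auto
    also have "\<dots> = s * ((16*N-16) / (7*C))" by (simp add: field_simps)
    also have "\<dots> \<le> s * (1/2)"
      using spos Cpos C8 by (intro mult_left_mono) (auto simp: field_simps)
    finally show ?thesis by simp
  qed
  have backtrack: "backtrack_mass N C \<le> s/2"
  proof -
    have "backtrack_mass N C \<le> 2*N / C" unfolding backtrack_mass_def using N Cpos by (intro frac_le) auto
    also have "\<dots> \<le> s/2"
    proof -
      have "4*N*(8*N*(N-1)) \<le> C"
        unfolding C_eq using N by (simp add: algebra_simps)
      then have "4*N \<le> 1 / (8*N*(N-1)) * C" using N by (simp add: field_simps)
      also have "\<dots> \<le> s * C" using s_low Cpos by (intro mult_right_mono) auto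
      finally show ?thesis using Cpos by (simp add: field_simps)
    qed
    finally show ?thesis .
  qed
  show ?thesis unfolding C_def[symmetric] block_defect_def using generic backtrack s_def by simp
qed

lemma block_defect_root:
  assumes N: "N \<ge> 2"
  obtains c where "c > 1" "block_defect N c = 0"
proof -
  have "N^3 \<ge> 2^3" using N by (intro power_mono) auto
  then have "64*N^3 \<ge> 1" by simp
  with IVT2'[of "block_defect N" "64*N^3" 0 1] block_defect_large[OF N]
    less_imp_le[OF block_defect_at_1[OF N]] continuous_on_block_defect[OF N]
  obtain c where "1 \<le> c" "block_defect N c = 0" by auto
  moreover have "c \<noteq> 1" using block_defect_at_1[OF N] calculation by auto
  ultimately show ?thesis by (intro that[of c]) auto
qed

lemma sq_mass_block_mass:
  assumes N: "N \<ge> 2" and c: "c > 1"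
  shows "sq_mass N c + (2*N-2) * block_mass N c = 1 / (2*N)"
proof -
  define D where "D = 1 + (2*N-1)*c"
  define X where "X = (2*N-1)*(c-1) / D"
  have D: "D > 0" using N c by (simp add: D_def add_pos_nonneg)
  have "(2*N-2) * block_mass N c = X / (2*N)"
    unfolding block_mass_def D_def[symmetric] X_def[symmetric] using N by (simp add: field_simps)
  moreover have "(2*N-1)*(c-1) = D - 2*N" by (simp add: D_def algebra_simps)
  then have "1 / D + X / (2*N) = 1 / (2*N)" unfolding X_def using D N by (simp add: field_simps)
  ultimately show ?thesis unfolding sq_mass_def D_def[symmetric] by simp
qed

lemma odds_sq_mass:
  assumes N: "N \<ge> 2" and c: "c > 1"
  shows "odds (sq_mass N c) * odds (1 - 1/(2*N)) = c"
proof -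
  have "1 + (2*N-1)*c > 0" using N c by (simp add: add_pos_nonneg)
  then have "odds (sq_mass N c) = (2*N-1)*c" by (simp add: odds_def sq_mass_def field_simps)
  moreover have "odds (1 - 1/(2*N)) = 1 / (2*N-1)" using N by (simp add: odds_def field_simps)
  ultimately show ?thesis using N by simp
qed

lemma block_mass_pos:
  assumes N: "N \<ge> 2" and c: "c > 1"
  shows "block_mass N c > 0"
proof -
  have "(2*N-1)*c > 0" "(2*N-1)*(c-1) > 0" "4*N*(N-1) > 0" using N c by simp_all
  then show ?thesis unfolding block_mass_def by (simp add: add_pos_pos)
qed

lemma masses_pos:
  assumes N: "N \<ge> 2" and c: "c > 1"
  shows "sq_mass N c > 0" "generic_mass N c > 0" "backtrack_mass N c > 0"
proof -
  have "(2*N-1)*c > 0" using N c by simp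
  then show "sq_mass N c > 0" by (simp add: sq_mass_def add_pos_pos)
  have "0 < block_mass N c" "block_mass N c \<le> 1/8"
    using block_mass_pos[OF N c] block_mass_bounds[OF N] c by auto
  then show "generic_mass N c > 0" using c by (simp add: generic_mass_def add_pos_pos)
  show "backtrack_mass N c > 0" using N c by (simp add: backtrack_mass_def)
qed

lemma odds_generic_mass:
  assumes N: "N \<ge> 2" and c: "c > 1"
  shows "odds (generic_mass N c) * odds (1 - block_mass N c) = c"
proof -
  define s where "s = block_mass N c"
  define Q where "Q = s + c * (1 - s)"
  have "s > 0" unfolding s_def by (rule block_mass_pos[OF N c])
  moreover have "s \<le> 1/8" using block_mass_bounds[OF N] c by (simp add: s_def)
  ultimately have s: "s > 0" "1 - s > 0" "Q > 0" using c by (auto simp: Q_def add_pos_pos)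
  have g: "generic_mass N c = s / Q" by (simp add: generic_mass_def s_def Q_def)
  have "odds (generic_mass N c) = (Q - s) / s"
    unfolding g odds_def using s by (simp add: field_simps)
  also have "Q - s = c * (1 - s)" by (simp add: Q_def)
  finally have "odds (generic_mass N c) = c * (1 - s) / s" .
  moreover have "odds (1 - s) = s / (1 - s)" by (simp add: odds_def)
  ultimately show ?thesis using s by (simp add: s_def[symmetric])
qed

lemma odds_backtrack_mass:
  assumes N: "N \<ge> 2" and c: "c > 1"
  shows "odds (backtrack_mass N c) * odds (1/(2*N)) = c"
proof -
  define M where "M = 2*N-1"
  have M: "M > 0" "M + c > 0" using N c by (auto simp: M_def)
  have d: "backtrack_mass N c = M / (M + c)" by (simp add: backtrack_mass_def M_def)
  then have "1 - backtrack_mass N c = c / (M + c)" using M by (simp add: field_simps)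
  then have "odds (backtrack_mass N c) = c / M" using M by (simp add: odds_def d)
  moreover have "odds (1/(2*N)) = M" using N by (simp add: odds_def M_def field_simps)
  ultimately show ?thesis using M by simp
qed

lemma generic_mass_contraction:
  assumes N: "N \<ge> 2" and c: "c > 1" and root: "block_defect N c = 0"
  shows "(2*N-2) * ((1 + (c-1) * generic_mass N c)^2 / c) < 1"
proof -
  define s where "s = block_mass N c"
  define b where "b = generic_mass N c"
  have s: "0 < s" "s \<le> 1 / (4*N*(N-1))" "s \<le> 1/8"
    using block_mass_pos[OF N c] block_mass_bounds[OF N] c by (auto simp: s_def)
  have b: "b > 0" using masses_pos[OF N c] by (simp add: b_def)
  have NN: "4*N*(N-1) \<ge> 8" using mult_mono[of 2 N 1 "N-1"] N by simp
  have "(2*N-2) * b \<ge> 0" using b N by simp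
  then have "backtrack_mass N c \<le> s" using root by (simp add: block_defect_def s_def b_def)
  then have "(2*N-1) / (2*N-1+c) \<le> 1 / (4*N*(N-1))" using s by (simp add: backtrack_mass_def)
  then have "(2*N-1) * (4*N*(N-1)) \<le> 2*N-1+c" using N c NN by (simp add: field_simps)
  moreover have "(2*N-1) * (4*N*(N-1)) \<ge> (2*N-1) * 8" using NN N by (intro mult_left_mono) auto
  ultimately have c_large: "c \<ge> 7*(2*N-1)" by simp
  have "c * b = c * s / (s + c * (1-s))" by (simp add: b_def generic_mass_def s_def)
  also have "\<dots> \<le> c * s / (c * (1-s))"
    using c s by (intro divide_left_mono) (auto intro!: mult_pos_pos add_pos_pos)
  also have "\<dots> = s / (1-s)" using c by simp
  also have "\<dots> \<le> 1/7" using s by (simp add: field_simps)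
  finally have "(c-1) * b \<le> 1/7" using b by (simp add: algebra_simps)
  moreover have "(c-1) * b \<ge> 0" using c b by simp
  ultimately have "(1 + (c-1) * b)^2 \<le> (8/7)^2" by (intro power_mono) auto
  then have "(2*N-2) * (1 + (c-1) * b)^2 \<le> (2*N-2) * (8/7)^2" using N by (intro mult_left_mono) auto
  also have "\<dots> < c" using c_large N by (simp add: power2_eq_square)
  finally show ?thesis using c by (simp add: b_def field_simps)
qed

section \<open>The equalizing point\<close>

lemma sum_S2_shape_value:
  fixes a b d :: real
  assumes "l \<in> letters n" "m \<in> other_letters n l"
  shows "sum (shape_value a b d) (S2 n l m) = (2 * real n - 2) * b + d"
proof -
  define Q where "Q = other_letters n m - {inv_letter l}"
  have l': "inv_letter l \<in> other_letters n m" by (rule inv_letter_other_letters[OF assms])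
  have "m \<noteq> inv_letter l" using assms(2) by auto
  moreover have "(\<Sum>q\<in>other_letters n m. if q = inv_letter l then d else b) = d + (\<Sum>q\<in>Q. b)"
    unfolding Q_def using l' by (simp add: sum.remove)
  moreover have "card Q = 2 * n - 3"
    using l' card_other_letters[of m n] other_letters_subset[of n l] assms(2) by (auto simp: Q_def)
  moreover have "n \<ge> 2" using assms by (auto simp: other_letters_def letters_def)
  ultimately show ?thesis by (simp add: sum_S2 of_nat_diff algebra_simps)
qed

lemma sum_S1_shape_value:
  fixes a b d :: real
  assumes "l \<in> letters n"
  shows "sum (shape_value a b d) (S1 n l) = a + (2 * real n - 2) * ((2 * real n - 2) * b + d)"
proof -
  have "n \<ge> 1" using assms by (auto simp: letters_def)
  then show ?thesis
    using assms by (simp add: sum_S1 sum_S2_shape_value card_other_letters of_nat_diff)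
qed

locale equalizer =
  fixes n :: nat and c a b d :: real
  assumes n: "n \<ge> 2" and c: "c > 1" and pos: "a > 0" "b > 0" "d > 0"
    and total: "a + (2 * real n - 2) * ((2 * real n - 2) * b + d) = 1 / (2 * real n)"
    and odds_a: "odds a * odds (1 - 1 / (2 * real n)) = c"
    and odds_b: "odds b * odds (1 - ((2 * real n - 2) * b + d)) = c"
    and odds_d: "odds d * odds (1 / (2 * real n)) = c"
    and contraction: "(2 * real n - 2) * ((1 + (c-1) * b)^2 / c) < 1"
begin

definition point :: "word \<Rightarrow> real" where
  "point w = (if w \<in> Psi n then shape_value a b d w else 0)"

lemma point_Psi: "w \<in> Psi n \<Longrightarrow> point w = shape_value a b d w"
  by (simp add: point_def)

lemma sum_point: "S \<subseteq> Psi n \<Longrightarrow> sum point S = sum (shape_value a b d) S"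
  by (intro sum.cong) (auto simp: point_def)

lemma sum_point_S2:
  "l \<in> letters n \<Longrightarrow> m \<in> other_letters n l \<Longrightarrow> sum point (S2 n l m) = (2 * real n - 2) * b + d"
  by (simp add: sum_point S2_subset_Psi sum_S2_shape_value)

lemma sum_point_S1: "l \<in> letters n \<Longrightarrow> sum point (S1 n l) = 1 / (2 * real n)"
  by (simp add: sum_point S1_subset_Psi sum_S1_shape_value total)

lemma sum_point_Psi: "sum point (Psi n) = 1"
  using n by (simp add: sum_Psi sum_point_S1 card_letters)

lemma sum_point_compl: "S \<subseteq> Psi n \<Longrightarrow> sum point (Psi n - S) = 1 - sum point S"
  using sum_diff[of "Psi n" S point] sum_point_Psi by simp

lemma point_in_Delta: "point \<in> Delta n"
  using pos sum_point_Psi by (auto simp: Delta_def point_def shape_value_def)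

lemma frel_point:
  assumes "w \<in> Psi n"
  shows "frel (w, companions n w) point = c"
  using assms
proof (cases rule: Psi_cases)
  case (square l)
  have "point [l,l] = a" by (simp add: point_Psi square_in_Psi[OF square(1)])
  then show ?thesis
    using square odds_a by (simp add: frel_eq sum_point_compl S1_subset_Psi sum_point_S1)
next
  case (repeat l m)
  have "m \<noteq> inv_letter l" using repeat(2) by auto
  then have "point [l,m,m] = b" by (simp add: point_Psi repeat_in_Psi[OF repeat(1,2)])
  then show ?thesis
    using repeat odds_b by (simp add: frel_eq sum_point_compl S2_subset_Psi sum_point_S2)
next
  case (triple l m q)
  have m: "m \<in> letters n" using triple(2) other_letters_subset by blast
  have pt: "point [l,m,q] = (if q = inv_letter l then d else b)"
    by (simp add: point_Psi triple_in_Psi[OF triple(1-3)])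
  show ?thesis
  proof (cases "q = inv_letter l")
    case True
    then show ?thesis
      using triple odds_d pt unfolding triple(4) companions_triple[OF triple(3)]
      by (simp add: frel_eq sum_point_S1)
  next
    case False
    then show ?thesis
      using triple odds_b pt unfolding triple(4) companions_triple[OF triple(3)]
      by (simp add: frel_eq sum_point_compl S2_subset_Psi[OF m] sum_point_S2[OF m])
  qed
qed

lemma FF_point: "FF n point = c"
proof -
  have "Psi n \<noteq> {}" using square_in_Psi[of "(1, 1)" n] n by (auto simp: letters_def signs_def)
  have "(\<lambda>r. frel r point) ` Fam n = (\<lambda>w. frel (w, companions n w) point) ` Psi n"
    by (simp add: Fam_eq image_image)
  also have "\<dots> = (\<lambda>_. c) ` Psi n" by (intro image_cong) (simp_all add: frel_point)
  also have "\<dots> = {c}" using \<open>Psi n \<noteq> {}\<close> by (simp add: image_constant_conv)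
  finally show ?thesis by (simp add: FF_def)
qed

lemma eq_point_if_FF_le:
  assumes x: "x \<in> Delta n" and le: "FF n x \<le> c"
  shows "x = point"
proof -
  define h where "h w = x w - point w" for w
  define \<gamma> where "\<gamma> t = (1 + (c-1) * t)^2 / c" for t
  define F where "F w = shape_value (\<gamma> a) (\<gamma> b) (\<gamma> d) w * sum h (companions n w) + h w" for w
  have F_tangent: "0 \<le> F w \<and> (F w = 0 \<longrightarrow> h w = 0)" if w: "w \<in> Psi n" for w
  proof -
    have "shape_value (\<gamma> a) (\<gamma> b) (\<gamma> d) w = \<gamma> (point w)"
      using w by (simp add: point_Psi shape_value_comp[of \<gamma>])
    then have "F w = (1 + (c-1) * point w)^2 / c * (\<Sum>v\<in>companions n w. x v - point v) + (x w - point w)"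
      by (simp add: F_def h_def \<gamma>_def)
    then show ?thesis
      using companion_tangent[OF w x point_in_Delta c le frel_point[OF w]] by (simp add: h_def)
  qed
  have "sum h (Psi n) = 0"
    using Delta_sum[OF x] sum_point_Psi by (simp add: h_def sum_subtractf)
  then have total_F: "(\<Sum>w\<in>Psi n. F w) = (2 * real n - 2) * \<gamma> b * (\<Sum>l\<in>letters n. F [l,l])"
    unfolding F_def by (rule sum_companion_forms)
  have squares_le: "(\<Sum>l\<in>letters n. F [l,l]) \<le> (\<Sum>w\<in>Psi n. F w)"
    using F_tangent by (intro sum_squares_le_sum_Psi) auto
  have squares_nonneg: "(\<Sum>l\<in>letters n. F [l,l]) \<ge> 0"
    using F_tangent square_in_Psi by (intro sum_nonneg) auto
  have "(2 * real n - 2) * \<gamma> b < 1" using contraction by (simp add: \<gamma>_def)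
  then have "(\<Sum>l\<in>letters n. F [l,l]) = 0"
    using total_F squares_le squares_nonneg by (smt (verit) mult_le_cancel_right1)
  then have "(\<Sum>w\<in>Psi n. F w) = 0" using total_F by simp
  then have "F w = 0" if "w \<in> Psi n" for w
    using F_tangent that sum_nonneg_eq_0_iff[of "Psi n" F] by auto
  then have "x w = point w" if "w \<in> Psi n" for w
    using F_tangent that by (simp add: h_def)
  moreover have "x w = point w" if "w \<notin> Psi n" for w
    using Delta_zero[OF x that] Delta_zero[OF point_in_Delta that] by simp
  ultimately show ?thesis by blast
qed

end

lemma equalizer_exists:
  assumes "n \<ge> 2"
  shows "\<exists>c a b d. equalizer n c a b d"
proof -
  define N where "N = real n"
  have N: "N \<ge> 2" using assms by (simp add: N_def)
  obtain c where c: "c > 1" and root: "block_defect N c = 0" by (rule block_defect_root[OF N])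
  have "(2*N-2) * generic_mass N c + backtrack_mass N c = block_mass N c"
    using root by (simp add: block_defect_def)
  then have "equalizer n c (sq_mass N c) (generic_mass N c) (backtrack_mass N c)"
    unfolding equalizer_def N_def[symmetric]
    using assms c masses_pos[OF N c] sq_mass_block_mass[OF N c] odds_sq_mass[OF N c]
      odds_generic_mass[OF N c] odds_backtrack_mass[OF N c] generic_mass_contraction[OF N c root]
    by simp
  then show ?thesis by blast
qed

theorem corollary5p7:
  fixes n :: nat
  assumes "n \<ge> 2"
  shows "\<exists>!x. x \<in> Delta n \<and> FF n x = (INF y\<in>Delta n. FF n y)"
proof -
  obtain c a b d where "equalizer n c a b d" using equalizer_exists[OF assms] by blast
  then interpret equalizer n c a b d .
  show ?thesis
    by (rule unique_argmin_INF[OF point_in_Delta]) (use FF_point eq_point_if_FF_le in auto)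
qed

end
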